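(* Let $n\geq 2$ and let $H$ be a complex Hadamard matrix of order $n$ with rows $h_1,\dots,h_n$ (each $h_i$ a $1\times n$ row vector). Let $K$ be the $n^2\times n^2$ block matrix whose $(i,j)$-th block (of size $n\times n$) is $h_j^{\ast}h_i$, for $1\le i,j\le n$. Then $Q:=K-I_{n^2}$ is a Seidel matrix associated to an $\left(n^{2},\frac{n(n+1)}{2}\right)$ complex equiangular tight frame.
   Context: A complex Hadamard matrix of order $n$ is an $n\times n$ complex matrix $H$ whose entries all have modulus $1$ and which satisfies $HH^{\ast}=nI_n$, where $^\ast$ denotes conjugate transpose. An $(N,k)$ frame is a Parseval frame of $N$ vectors $f_1,\dots,f_N$ in $\mathbb{C}^k$ (usual inner product), i.e. $\sum_{i=1}^N|\langle x,f_i\rangle|^2=\|x\|^2$ for all $x\in\mathbb{C}^k$; its analysis operator $V$ is the $N\times k$ matrix with $(Vx)_j=\langle x,f_j\rangle$. An $(N,k)$ complex equiangular tight frame (CETF) is an $(N,k)$ frame that is uniform ($\|f_i\|$ constant) and equiangular ($|\langle f_i,f_j\rangle|$ constant for $i\neq j$); for such a frame $VV^{\ast}=\frac{k}{N}I_N+\sqrt{\frac{k(N-k)}{N^2(N-1)}}\,Q$ where $Q$ is a self-adjoint matrix with zero diagonal and all off-diagonal entries of modulus $1$; $Q$ is called the Seidel matrix associated with the frame. *)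

theory Defs
  imports Complex_Main
begin

text \<open>Vectors in C^k are represented as functions nat => complex (coordinates j < k);
  n x m matrices as functions nat => nat => complex with indices below the bounds.
  Indices are 0-based.\<close>

definition cinner :: "nat \<Rightarrow> (nat \<Rightarrow> complex) \<Rightarrow> (nat \<Rightarrow> complex) \<Rightarrow> complex" where
  "cinner k x y = (\<Sum>j<k. x j * cnj (y j))"

definition cnorm :: "nat \<Rightarrow> (nat \<Rightarrow> complex) \<Rightarrow> real" where
  "cnorm k x = sqrt (\<Sum>j<k. (cmod (x j))^2)"

definition complex_hadamard :: "nat \<Rightarrow> (nat \<Rightarrow> nat \<Rightarrow> complex) \<Rightarrow> bool" where
  "complex_hadamard n H \<longleftrightarrow>
     (\<forall>i<n. \<forall>j<n. cmod (H i j) = 1) \<and>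
     (\<forall>i<n. \<forall>j<n. (\<Sum>l<n. H i l * cnj (H j l)) = (if i = j then of_nat n else 0))"

definition parseval_frame :: "nat \<Rightarrow> nat \<Rightarrow> (nat \<Rightarrow> nat \<Rightarrow> complex) \<Rightarrow> bool" where
  "parseval_frame N k f \<longleftrightarrow>
     (\<forall>x :: nat \<Rightarrow> complex. (\<Sum>i<N. (cmod (cinner k x (f i)))^2) = (cnorm k x)^2)"

definition cetf :: "nat \<Rightarrow> nat \<Rightarrow> (nat \<Rightarrow> nat \<Rightarrow> complex) \<Rightarrow> bool" where
  "cetf N k f \<longleftrightarrow> parseval_frame N k f \<and>
     (\<exists>c. \<forall>i<N. cnorm k (f i) = c) \<and>
     (\<exists>c. \<forall>i<N. \<forall>j<N. i \<noteq> j \<longrightarrow> cmod (cinner k (f i) (f j)) = c)"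

text \<open>Analysis operator V (N x k): (V x)_j = <x, f_j>, i.e. V j l = cnj (f j l).\<close>
definition analysis_op :: "(nat \<Rightarrow> nat \<Rightarrow> complex) \<Rightarrow> nat \<Rightarrow> nat \<Rightarrow> complex" where
  "analysis_op f j l = cnj (f j l)"

definition seidel_of_cetf :: "nat \<Rightarrow> nat \<Rightarrow> (nat \<Rightarrow> nat \<Rightarrow> complex) \<Rightarrow> (nat \<Rightarrow> nat \<Rightarrow> complex) \<Rightarrow> bool" where
  "seidel_of_cetf N k f Q \<longleftrightarrow> cetf N k f \<and>
     (\<forall>i<N. \<forall>j<N. Q j i = cnj (Q i j)) \<and>
     (\<forall>i<N. Q i i = 0) \<and>
     (\<forall>i<N. \<forall>j<N. i \<noteq> j \<longrightarrow> cmod (Q i j) = 1) \<and>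
     (\<forall>i<N. \<forall>j<N.
        (\<Sum>l<k. analysis_op f i l * cnj (analysis_op f j l)) =
          (if i = j then of_real (real k / real N) else 0)
          + of_real (sqrt (real k * (real N - real k) / ((real N)^2 * (real N - 1)))) * Q i j)"

text \<open>Block matrix K of size n^2 x n^2: block (i,j) is h_j^* h_i, so the entry in row
  i*n+a, column j*n+b is cnj (H j a) * H i b.\<close>
definition hadamard_block :: "nat \<Rightarrow> (nat \<Rightarrow> nat \<Rightarrow> complex) \<Rightarrow> nat \<Rightarrow> nat \<Rightarrow> complex" where
  "hadamard_block n H r s = cnj (H (s div n) (r mod n)) * H (r div n) (s mod n)"

end

theory Submission
  imports Defs "Jordan_Normal_Form.Determinant"
begin

text \<open>Identify C^(n^2) with C^n \<otimes> C^n via r = i n + a. Since H/\<surd>n is unitary, the vectors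
  B_r = e_i \<otimes> c_a/\<surd>n, with c_a the conjugated a-th column of H, form an orthonormal basis,
  and pairing B_r with the flipped tensor B_s gives K_rs/n. Expand each B_r in the orthonormal
  basis e_uu, (e_uv + e_vu)/\<surd>2 (u < v) of the symmetric tensors, a space of dimension
  n(n+1)/2. These coordinate vectors come from an orthonormal basis through an orthogonal
  projection, hence form a Parseval frame, and their Gram matrix is that of the projection
  (1 + flip)/2, namely (I + K/n)/2 = (n+1)/(2n) I + Q/(2n). As K has unimodular entries and
  unit diagonal, the frame is uniform and equiangular.\<close>

lemma complex_hadamard_columns:
  assumes "complex_hadamard n H" and "a < n" and "b < n"
  shows "(\<Sum>l<n. cnj (H l a) * H l b) = (if a = b then of_nat n else 0)"
proof -
  have n: "n > 0" using assms(2) by simp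
  define A where "A = mat n n (\<lambda>(i, j). H i j)"
  define B where "B = mat n n (\<lambda>(i, j). cnj (H j i) / of_nat n)"
  have "A * B = 1\<^sub>m n"
  proof (rule eq_matI)
    fix i j assume "i < dim_row (1\<^sub>m n :: complex mat)" "j < dim_col (1\<^sub>m n :: complex mat)"
    then show "(A * B) $$ (i, j) = 1\<^sub>m n $$ (i, j)"
      using assms(1) n
      by (simp add: complex_hadamard_def A_def B_def scalar_prod_def lessThan_atLeast0
          sum_divide_distrib[symmetric])
  qed (auto simp: A_def B_def)
  then have "B * A = 1\<^sub>m n"
    by (rule mat_mult_left_right_inverse[rotated 2]) (auto simp: A_def B_def)
  moreover have "(B * A) $$ (a, b) = (\<Sum>l<n. cnj (H l a) * H l b) / of_nat n"
    using assms(2,3)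
    by (simp add: A_def B_def scalar_prod_def lessThan_atLeast0 sum_divide_distrib)
  ultimately show ?thesis
    using assms(2,3) n by (auto simp: field_simps split: if_splits)
qed

lemma cinner_self: "cinner k x x = of_real ((cnorm k x)^2)"
  by (simp add: cinner_def cnorm_def sum_nonneg flip: complex_norm_square)

lemma parseval_frame_of_orthonormal_columns:
  assumes cols: "\<And>l l'. l < k \<Longrightarrow> l' < k \<Longrightarrow> (\<Sum>r<N. V r l * cnj (V r l')) = of_bool (l = l')"
  shows "parseval_frame N k (\<lambda>r l. cnj (V r l))"
  unfolding parseval_frame_def
proof
  fix x :: "nat \<Rightarrow> complex"
  define y where "y r = cinner k x (\<lambda>l. cnj (V r l))" for r
  have "(\<Sum>r<N. y r * cnj (y r)) =
      (\<Sum>r<N. \<Sum>l<k. \<Sum>l'<k. x l * cnj (x l') * (V r l * cnj (V r l')))"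
    by (simp add: y_def cinner_def cnj_sum sum_product algebra_simps)
  also have "\<dots> = (\<Sum>l<k. \<Sum>l'<k. x l * cnj (x l') * (\<Sum>r<N. V r l * cnj (V r l')))"
    by (simp add: sum_distrib_left sum.swap[of _ "{..<N}"])
  also have "\<dots> = (\<Sum>l<k. \<Sum>l'<k. if l' = l then x l * cnj (x l) else 0)"
    by (intro sum.cong refl) (simp add: cols)
  also have "\<dots> = (\<Sum>l<k. x l * cnj (x l))"
    by (simp add: sum.delta)
  also have "\<dots> = cinner k x x"
    by (simp add: cinner_def)
  finally have "of_real (\<Sum>r<N. (cmod (y r))^2) = (of_real ((cnorm k x)^2) :: complex)"
    by (simp add: cinner_self flip: complex_norm_square)
  then show "(\<Sum>r<N. (cmod (cinner k x (\<lambda>l. cnj (V r l))))^2) = (cnorm k x)^2"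
    by (simp only: of_real_eq_iff y_def)
qed

definition seidel_matrix :: "nat \<Rightarrow> (nat \<Rightarrow> nat \<Rightarrow> complex) \<Rightarrow> bool" where
  "seidel_matrix N Q \<longleftrightarrow>
     (\<forall>i<N. \<forall>j<N. Q j i = cnj (Q i j)) \<and> (\<forall>i<N. Q i i = 0) \<and>
     (\<forall>i<N. \<forall>j<N. i \<noteq> j \<longrightarrow> cmod (Q i j) = 1)"

lemma seidel_of_cetfI:
  assumes parseval: "parseval_frame N k f" and Q: "seidel_matrix N Q"
    and gram: "\<And>i j. i < N \<Longrightarrow> j < N \<Longrightarrow>
      (\<Sum>l<k. analysis_op f i l * cnj (analysis_op f j l)) =
        (if i = j then of_real (real k / real N) else 0)
        + of_real (sqrt (real k * (real N - real k) / ((real N)^2 * (real N - 1)))) * Q i j"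
  shows "seidel_of_cetf N k f Q"
proof -
  have diag: "\<And>i. i < N \<Longrightarrow> Q i i = 0"
    and off_diag: "\<And>i j. i < N \<Longrightarrow> j < N \<Longrightarrow> i \<noteq> j \<Longrightarrow> cmod (Q i j) = 1"
    using Q unfolding seidel_matrix_def by blast+
  have inner: "cinner k (f i) (f j) = cnj (\<Sum>l<k. analysis_op f i l * cnj (analysis_op f j l))" for i j
    by (simp add: cinner_def analysis_op_def cnj_sum mult.commute)
  have norm: "cnorm k (f i) = sqrt (real k / real N)" if "i < N" for i
  proof -
    have "of_real ((cnorm k (f i))^2) = (of_real (real k / real N) :: complex)"
      unfolding cinner_self[symmetric] using that by (simp add: inner gram diag)
    then have "(cnorm k (f i))^2 = real k / real N"
      by (simp only: of_real_eq_iff)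
    moreover have "cnorm k (f i) \<ge> 0"
      by (simp add: cnorm_def sum_nonneg)
    ultimately show ?thesis
      by (metis real_sqrt_unique)
  qed
  have angle: "cmod (cinner k (f i) (f j)) =
      \<bar>sqrt (real k * (real N - real k) / ((real N)^2 * (real N - 1)))\<bar>"
    if "i < N" "j < N" "i \<noteq> j" for i j
    using that by (simp add: inner gram off_diag norm_mult)
  have "cetf N k f"
    unfolding cetf_def using parseval norm angle by blast
  with Q gram show ?thesis
    unfolding seidel_of_cetf_def seidel_matrix_def by blast
qed

definition upper_pairs :: "nat \<Rightarrow> (nat \<times> nat) set" where
  "upper_pairs n = {(u, v). u \<le> v \<and> v < n}"

lemma upper_pairs_Suc: "upper_pairs (Suc n) = upper_pairs n \<union> (\<lambda>u. (u, n)) ` {..n}"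
  and upper_pairs_disjoint: "upper_pairs n \<inter> (\<lambda>u. (u, n)) ` {..n} = {}"
  by (auto simp: upper_pairs_def)

lemma finite_upper_pairs [simp]: "finite (upper_pairs n)"
  by (rule finite_subset[of _ "{..<n} \<times> {..<n}"]) (auto simp: upper_pairs_def)

lemma card_upper_pairs: "card (upper_pairs n) = n * (n + 1) div 2"
proof -
  have "card (upper_pairs n) * 2 = n * (n + 1)"
  proof (induction n)
    case (Suc n)
    have "card (upper_pairs (Suc n)) = card (upper_pairs n) + Suc n"
      unfolding upper_pairs_Suc
      by (subst card_Un_disjoint) (auto simp: upper_pairs_disjoint card_image inj_on_def)
    then show ?case using Suc by simp
  qed (simp add: upper_pairs_def)
  then show ?thesis by simp
qed

lemma sum_square_eq_sum_upper_pairs: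
  fixes F :: "nat \<Rightarrow> nat \<Rightarrow> 'a::comm_monoid_add"
  shows "(\<Sum>u<n. \<Sum>v<n. F u v) = (\<Sum>(u, v)\<in>upper_pairs n. if u = v then F u u else F u v + F v u)"
proof (induction n)
  case (Suc n)
  let ?G = "\<lambda>(u, v). if u = v then F u u else F u v + F v u"
  have "sum ?G (upper_pairs (Suc n)) = sum ?G (upper_pairs n) + (\<Sum>u\<le>n. ?G (u, n))"
    unfolding upper_pairs_Suc
    by (subst sum.union_disjoint) (auto simp: upper_pairs_disjoint sum.reindex inj_on_def)
  also have "(\<Sum>u\<le>n. ?G (u, n)) = (\<Sum>u<n. F u n + F n u) + F n n"
    by (simp add: lessThan_Suc_atMost[symmetric])
  finally show ?case
    using Suc by (simp add: sum.distrib add_ac)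
qed (simp add: upper_pairs_def)

definition sym_coords :: "(nat \<Rightarrow> nat \<Rightarrow> complex) \<Rightarrow> nat \<times> nat \<Rightarrow> complex" where
  "sym_coords x p =
     (case p of (u, v) \<Rightarrow> if u = v then x u u else (x u v + x v u) / of_real (sqrt 2))"

lemma of_real_sqrt2_square: "of_real (sqrt 2) * of_real (sqrt 2) = (2 :: complex)"
  by (simp flip: of_real_mult)

lemma sym_coords_inner:
  "(\<Sum>p\<in>upper_pairs n. sym_coords x p * cnj (sym_coords y p)) =
     (\<Sum>u<n. \<Sum>v<n. x u v * cnj (y u v + y v u)) / 2"
proof -
  define F where "F u v = x u v * cnj (y u v + y v u) / 2" for u v
  have "sym_coords x (u, v) * cnj (sym_coords y (u, v)) =
      (if u = v then F u u else F u v + F v u)" for u v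
    by (auto simp: F_def sym_coords_def of_real_sqrt2_square algebra_simps add_divide_distrib)
  then have "(\<Sum>p\<in>upper_pairs n. sym_coords x p * cnj (sym_coords y p)) = (\<Sum>u<n. \<Sum>v<n. F u v)"
    unfolding sum_square_eq_sum_upper_pairs by (intro sum.cong) auto
  then show ?thesis
    by (simp add: F_def sum_divide_distrib)
qed

lemma sym_coords_orthonormal:
  fixes W :: "nat \<Rightarrow> nat \<Rightarrow> nat \<Rightarrow> complex"
  assumes W: "\<And>a b a' b'. a < n \<Longrightarrow> b < n \<Longrightarrow> a' < n \<Longrightarrow> b' < n \<Longrightarrow>
      (\<Sum>r<N. W r a b * cnj (W r a' b')) = of_bool (a = a' \<and> b = b')"
    and p: "p \<in> upper_pairs n" and q: "q \<in> upper_pairs n"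
  shows "(\<Sum>r<N. sym_coords (W r) p * cnj (sym_coords (W r) q)) = of_bool (p = q)"
proof -
  obtain u v u' v' where pq: "p = (u, v)" "q = (u', v')" "u \<le> v" "v < n" "u' \<le> v'" "v' < n"
    using p q by (auto simp: upper_pairs_def)
  show ?thesis
    using pq by (cases "u = v"; cases "u' = v'")
      (auto simp: W sym_coords_def of_real_sqrt2_square algebra_simps sum.distrib
        sum_divide_distrib[symmetric])
qed

lemma sum_lessThan_mult_div_mod:
  fixes f :: "nat \<Rightarrow> nat \<Rightarrow> 'a::comm_monoid_add"
  shows "(\<Sum>r<m * n. f (r div n) (r mod n)) = (\<Sum>i<m. \<Sum>a<n. f i a)"
proof -
  have "(\<Sum>r<m * n. f (r div n) (r mod n)) = (\<Sum>i<m. \<Sum>a<n. f ((i * n + a) div n) ((i * n + a) mod n))"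
    by (simp add: sum.nat_group[symmetric] sum.shift_bounds_nat_ivl[of _ 0, simplified]
        add.commute atLeast0LessThan)
  also have "\<dots> = (\<Sum>i<m. \<Sum>a<n. f i a)"
    by (intro sum.cong) auto
  finally show ?thesis .
qed

lemma div_mod_less_square:
  fixes r n :: nat
  assumes "r < n^2"
  shows "r div n < n" and "r mod n < n"
proof -
  have "n > 0" using assms by (cases n) auto
  then show "r mod n < n" by simp
  show "r div n < n" using assms by (simp add: power2_eq_square less_mult_imp_div_less)
qed

definition hadamard_basis :: "nat \<Rightarrow> (nat \<Rightarrow> nat \<Rightarrow> complex) \<Rightarrow> nat \<Rightarrow> nat \<Rightarrow> nat \<Rightarrow> complex" where
  "hadamard_basis n H r u v = (if u = r div n then cnj (H v (r mod n)) / of_real (sqrt n) else 0)"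

lemma of_real_sqrt_square: "of_real (sqrt (real n)) * of_real (sqrt (real n)) = (of_nat n :: complex)"
  by (simp flip: of_real_mult)

lemma hadamard_basis_mult_cnj:
  "hadamard_basis n H r u v * cnj (hadamard_basis n H s u' v') =
     (if u = r div n then if u' = s div n
      then cnj (H v (r mod n)) * H v' (s mod n) / of_nat n else 0 else 0)"
  by (simp add: hadamard_basis_def of_real_sqrt_square)

lemma hadamard_basis_orthonormal:
  assumes H: "complex_hadamard n H" and r: "r < n^2" and s: "s < n^2"
  shows "(\<Sum>u<n. \<Sum>v<n. hadamard_basis n H r u v * cnj (hadamard_basis n H s u v)) = of_bool (r = s)"
proof -
  have n: "n > 0" using r by (cases n) auto
  note lt = div_mod_less_square[OF r] div_mod_less_square(2)[OF s]
  have "(\<Sum>u<n. \<Sum>v<n. hadamard_basis n H r u v * cnj (hadamard_basis n H s u v)) =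
      of_bool (r div n = s div n) * (\<Sum>v<n. cnj (H v (r mod n)) * H v (s mod n)) / of_nat n"
    using lt by (subst sum.swap) (simp add: hadamard_basis_mult_cnj sum_divide_distrib)
  also have "\<dots> = of_bool (r div n = s div n \<and> r mod n = s mod n)"
    using complex_hadamard_columns[OF H lt(2,3)] n by simp
  also have "(r div n = s div n \<and> r mod n = s mod n) \<longleftrightarrow> r = s"
    by (metis div_mult_mod_eq)
  finally show ?thesis .
qed

lemma hadamard_basis_swap:
  assumes r: "r < n^2" and s: "s < n^2"
  shows "(\<Sum>u<n. \<Sum>v<n. hadamard_basis n H r u v * cnj (hadamard_basis n H s v u)) =
    hadamard_block n H r s / of_nat n"
  using div_mod_less_square(1)[OF r] div_mod_less_square(1)[OF s]
  by (subst sum.swap) (simp add: hadamard_basis_mult_cnj hadamard_block_def)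

lemma hadamard_basis_columns:
  assumes H: "complex_hadamard n H" and lt: "a < n" "b < n" "a' < n" "b' < n"
  shows "(\<Sum>r<n^2. hadamard_basis n H r a b * cnj (hadamard_basis n H r a' b')) =
    of_bool (a = a' \<and> b = b')"
proof -
  have n: "n > 0" using lt by simp
  have "(\<Sum>r<n^2. hadamard_basis n H r a b * cnj (hadamard_basis n H r a' b')) =
      (\<Sum>i<n. \<Sum>c<n. if a = i then if a' = i then cnj (H b c) * H b' c / of_nat n else 0 else 0)"
    unfolding hadamard_basis_mult_cnj power2_eq_square
    by (rule sum_lessThan_mult_div_mod)
  also have "\<dots> = of_bool (a = a') * (\<Sum>c<n. H b' c * cnj (H b c)) / of_nat n"
    using lt by (subst sum.swap) (simp add: sum_divide_distrib mult.commute)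
  finally show ?thesis
    using H lt n by (auto simp: complex_hadamard_def)
qed

lemma hadamard_block_diag:
  assumes "complex_hadamard n H" and "r < n^2"
  shows "hadamard_block n H r r = 1"
proof -
  from div_mod_less_square[OF assms(2)] have "cmod (H (r div n) (r mod n)) = 1"
    using assms(1) by (simp add: complex_hadamard_def)
  then show ?thesis
    using complex_norm_square[of "H (r div n) (r mod n)"] by (simp add: hadamard_block_def mult.commute)
qed

lemma seidel_matrix_hadamard_block:
  assumes "complex_hadamard n H"
  shows "seidel_matrix (n^2) (\<lambda>r s. hadamard_block n H r s - (if r = s then 1 else 0))"
proof -
  have "cmod (hadamard_block n H r s) = 1" if "r < n^2" "s < n^2" for r s
    using assms div_mod_less_square[OF that(1)] div_mod_less_square[OF that(2)]
    by (simp add: hadamard_block_def norm_mult complex_hadamard_def)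
  then show ?thesis
    using hadamard_block_diag[OF assms]
    by (auto simp: seidel_matrix_def hadamard_block_def mult.commute)
qed

lemma sym_coords_hadamard_basis_inner:
  assumes "complex_hadamard n H" and "r < n^2" and "s < n^2"
  shows "(\<Sum>p\<in>upper_pairs n. sym_coords (hadamard_basis n H r) p *
            cnj (sym_coords (hadamard_basis n H s) p)) =
    (of_bool (r = s) + hadamard_block n H r s / of_nat n) / 2"
  using assms
  by (simp add: sym_coords_inner distrib_left sum.distrib hadamard_basis_orthonormal
      hadamard_basis_swap)

lemma hadamard_frame:
  assumes H: "complex_hadamard n H"
  obtains f where "parseval_frame (n^2) (n * (n + 1) div 2) f"
    and "\<And>r s. r < n^2 \<Longrightarrow> s < n^2 \<Longrightarrow>
      (\<Sum>l<n * (n + 1) div 2. analysis_op f r l * cnj (analysis_op f s l)) =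
        (of_bool (r = s) + hadamard_block n H r s / of_nat n) / 2"
proof -
  define k where "k = n * (n + 1) div 2"
  obtain g where g: "bij_betw g {..<k} (upper_pairs n)"
    using finite_same_card_bij[of "{..<k}" "upper_pairs n"] by (auto simp: k_def card_upper_pairs)
  define V where "V r l = sym_coords (hadamard_basis n H r) (g l)" for r l
  have "(\<Sum>r<n^2. V r l * cnj (V r l')) = of_bool (l = l')" if "l < k" "l' < k" for l l'
  proof -
    have "g l \<in> upper_pairs n" "g l' \<in> upper_pairs n" "g l = g l' \<longleftrightarrow> l = l'"
      using g that by (auto simp: bij_betw_def inj_on_def)
    then show ?thesis
      unfolding V_def using sym_coords_orthonormal[OF hadamard_basis_columns[OF H]] by simp
  qed
  then have "parseval_frame (n^2) k (\<lambda>r l. cnj (V r l))"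
    by (rule parseval_frame_of_orthonormal_columns)
  moreover have "(\<Sum>l<k. V r l * cnj (V s l)) = (of_bool (r = s) + hadamard_block n H r s / of_nat n) / 2"
    if "r < n^2" "s < n^2" for r s
    unfolding V_def using that
    by (simp add: sum.reindex_bij_betw[OF g, of "\<lambda>p. _ p * cnj (_ p)"] sym_coords_hadamard_basis_inner[OF H])
  ultimately show ?thesis
    using that unfolding k_def analysis_op_def by simp
qed

lemma hadamard_cetf_constants:
  fixes n :: nat
  assumes "n \<ge> 2"
  defines "k \<equiv> n * (n + 1) div 2"
  shows "real k / real (n^2) = (real n + 1) / (2 * real n)"
    and "sqrt (real k * (real (n^2) - real k) / ((real (n^2))^2 * (real (n^2) - 1))) = 1 / (2 * real n)"
proof -
  have k: "real k = real n * (real n + 1) / 2"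
    unfolding k_def by (subst real_of_nat_div) (auto simp: algebra_simps)
  show "real k / real (n^2) = (real n + 1) / (2 * real n)"
    using assms(1) by (simp add: k field_simps power2_eq_square)
  have "real n ^ 2 - 1 = (real n - 1) * (real n + 1)"
    by (simp add: algebra_simps power2_eq_square)
  moreover have "(real n - 1) * (real n + 1) > 0"
    using assms(1) by simp
  ultimately have "real k * (real (n^2) - real k) / ((real (n^2))^2 * (real (n^2) - 1)) = (1 / (2 * real n))^2"
    using assms(1) by (simp add: k field_simps power2_eq_square)
  then show "sqrt (real k * (real (n^2) - real k) / ((real (n^2))^2 * (real (n^2) - 1))) = 1 / (2 * real n)"
    by simp
qed

theorem lemma1:
  fixes n :: nat and H :: "nat \<Rightarrow> nat \<Rightarrow> complex"
  assumes "n \<ge> 2" and "complex_hadamard n H"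
  shows "\<exists>f. seidel_of_cetf (n^2) (n * (n + 1) div 2) f
                (\<lambda>r s. hadamard_block n H r s - (if r = s then 1 else 0))"
proof -
  obtain f where parseval: "parseval_frame (n^2) (n * (n + 1) div 2) f"
    and gram: "\<And>r s. r < n^2 \<Longrightarrow> s < n^2 \<Longrightarrow>
      (\<Sum>l<n * (n + 1) div 2. analysis_op f r l * cnj (analysis_op f s l)) =
        (of_bool (r = s) + hadamard_block n H r s / of_nat n) / 2"
    using hadamard_frame[OF assms(2)] by blast
  have "real n \<noteq> 0"
    using assms(1) by simp
  then have "seidel_of_cetf (n^2) (n * (n + 1) div 2) f
      (\<lambda>r s. hadamard_block n H r s - (if r = s then 1 else 0))"
    using hadamard_block_diag[OF assms(2)]
    by (intro seidel_of_cetfI[OF parseval seidel_matrix_hadamard_block[OF assms(2)]])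
      (simp only: hadamard_cetf_constants[OF assms(1)] gram, simp add: field_simps)
  then show ?thesis by blast
qed

end
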